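(* Let $Q$ be the quiver with one vertex $e$ and one loop $a$, let $Z=\{a^m\}$ with $m\ge2$ such that the characteristic $p$ of $k$ divides $m$, and let $\Lambda=kQ/\langle Z\rangle$. The following are equivalent: (i) the Lie algebra $\operatorname{H}^1(\Lambda,\Lambda)$ is simple; (ii) $\operatorname{H}^1(\Lambda,\Lambda)$ is semisimple; (iii) $m=p$ and $p>2$; (iv) $\operatorname{H}^1(\Lambda,\Lambda)$ is isomorphic to the Witt Lie algebra $W(1,1):=\operatorname{Der}(k[X]/(X^p))$ and $p>2$.
   Context: $k$ is an algebraically closed field of characteristic $p>0$. $\operatorname{H}^1(\Lambda,\Lambda)=\operatorname{Der}_k(\Lambda)/\operatorname{Ad}_k(\Lambda)$ is the Lie algebra of derivations modulo inner derivations (commutator bracket). A Lie algebra is semisimple if its solvable radical is zero. *)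

theory Defs
  imports "HOL-Computational_Algebra.Polynomial"
begin

record ('k, 'a) lie_alg =
  lcarrier :: "'a set"
  lzero    :: 'a
  ladd     :: "'a \<Rightarrow> 'a \<Rightarrow> 'a"
  lsmult   :: "'k \<Rightarrow> 'a \<Rightarrow> 'a"
  lbr      :: "'a \<Rightarrow> 'a \<Rightarrow> 'a"

definition lsubspace :: "('k, 'a) lie_alg \<Rightarrow> 'a set \<Rightarrow> bool" where
  "lsubspace L S \<longleftrightarrow> S \<subseteq> lcarrier L \<and> lzero L \<in> S \<and>
     (\<forall>x\<in>S. \<forall>y\<in>S. ladd L x y \<in> S) \<and> (\<forall>c. \<forall>x\<in>S. lsmult L c x \<in> S)"

definition lspan :: "('k, 'a) lie_alg \<Rightarrow> 'a set \<Rightarrow> 'a set" where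
  "lspan L X = \<Inter> {S. lsubspace L S \<and> X \<subseteq> S}"

definition lideal :: "('k, 'a) lie_alg \<Rightarrow> 'a set \<Rightarrow> bool" where
  "lideal L I \<longleftrightarrow> lsubspace L I \<and> (\<forall>x\<in>lcarrier L. \<forall>y\<in>I. lbr L x y \<in> I)"

definition lderived :: "('k, 'a) lie_alg \<Rightarrow> 'a set \<Rightarrow> 'a set" where
  "lderived L I = lspan L {lbr L x y | x y. x \<in> I \<and> y \<in> I}"

definition lsolvable_ideal :: "('k, 'a) lie_alg \<Rightarrow> 'a set \<Rightarrow> bool" where
  "lsolvable_ideal L I \<longleftrightarrow> lideal L I \<and> (\<exists>n. (lderived L ^^ n) I = {lzero L})"

definition lradical :: "('k, 'a) lie_alg \<Rightarrow> 'a set" where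
  "lradical L = lspan L (\<Union> {I. lsolvable_ideal L I})"

definition lsemisimple :: "('k, 'a) lie_alg \<Rightarrow> bool" where
  "lsemisimple L \<longleftrightarrow> lradical L = {lzero L}"

definition lsimple :: "('k, 'a) lie_alg \<Rightarrow> bool" where
  "lsimple L \<longleftrightarrow> (\<exists>x\<in>lcarrier L. \<exists>y\<in>lcarrier L. lbr L x y \<noteq> lzero L) \<and>
     (\<forall>I. lideal L I \<longrightarrow> I = {lzero L} \<or> I = lcarrier L)"

definition lie_iso :: "('k, 'a) lie_alg \<Rightarrow> ('k, 'b) lie_alg \<Rightarrow> ('a \<Rightarrow> 'b) \<Rightarrow> bool" where
  "lie_iso L M f \<longleftrightarrow> bij_betw f (lcarrier L) (lcarrier M) \<and>
     (\<forall>x\<in>lcarrier L. \<forall>y\<in>lcarrier L. f (ladd L x y) = ladd M (f x) (f y)) \<and>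
     (\<forall>c. \<forall>x\<in>lcarrier L. f (lsmult L c x) = lsmult M c (f x)) \<and>
     (\<forall>x\<in>lcarrier L. \<forall>y\<in>lcarrier L. f (lbr L x y) = lbr M (f x) (f y))"

definition lie_isomorphic :: "('k, 'a) lie_alg \<Rightarrow> ('k, 'b) lie_alg \<Rightarrow> bool" where
  "lie_isomorphic L M \<longleftrightarrow> (\<exists>f. lie_iso L M f)"

definition lcoset :: "('k, 'a) lie_alg \<Rightarrow> 'a set \<Rightarrow> 'a \<Rightarrow> 'a set" where
  "lcoset L I x = {ladd L x i | i. i \<in> I}"

definition lquot :: "('k, 'a) lie_alg \<Rightarrow> 'a set \<Rightarrow> ('k, 'a set) lie_alg" where
  "lquot L I = \<lparr> lcarrier = lcoset L I ` lcarrier L,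
      lzero = lcoset L I (lzero L),
      ladd = (\<lambda>X Y. lcoset L I (ladd L (SOME x. x \<in> X) (SOME y. y \<in> Y))),
      lsmult = (\<lambda>c X. lcoset L I (lsmult L c (SOME x. x \<in> X))),
      lbr = (\<lambda>X Y. lcoset L I (lbr L (SOME x. x \<in> X) (SOME y. y \<in> Y))) \<rparr>"

section \<open>The truncated algebra k[a]/(a^m) = kQ/<a^m> (Q: one vertex, one loop a)\<close>

definition tcarrier :: "nat \<Rightarrow> 'k::field poly set" where
  "tcarrier m = {f. degree f < m}"

definition tmult :: "nat \<Rightarrow> 'k::field poly \<Rightarrow> 'k poly \<Rightarrow> 'k poly" where
  "tmult m f g = (f * g) mod (monom 1 m)"

definition der_set :: "nat \<Rightarrow> ('k::field poly \<Rightarrow> 'k poly) set" where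
  "der_set m = {D. (\<forall>f. f \<notin> tcarrier m \<longrightarrow> D f = 0) \<and>
      (\<forall>f\<in>tcarrier m. D f \<in> tcarrier m) \<and>
      (\<forall>f\<in>tcarrier m. \<forall>g\<in>tcarrier m. D (f + g) = D f + D g) \<and>
      (\<forall>c. \<forall>f\<in>tcarrier m. D (smult c f) = smult c (D f)) \<and>
      (\<forall>f\<in>tcarrier m. \<forall>g\<in>tcarrier m.
          D (tmult m f g) = tmult m f (D g) + tmult m (D f) g)}"

definition inner_ders :: "nat \<Rightarrow> ('k::field poly \<Rightarrow> 'k poly) set" where
  "inner_ders m = {(\<lambda>g. if g \<in> tcarrier m then tmult m f g - tmult m g f else 0) | f.
      f \<in> tcarrier m}"

definition Der_lie :: "nat \<Rightarrow> ('k::field, 'k poly \<Rightarrow> 'k poly) lie_alg" where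
  "Der_lie m = \<lparr> lcarrier = der_set m,
      lzero = (\<lambda>_. 0),
      ladd = (\<lambda>D E x. D x + E x),
      lsmult = (\<lambda>c D x. smult c (D x)),
      lbr = (\<lambda>D E x. D (E x) - E (D x)) \<rparr>"

definition HH1 :: "nat \<Rightarrow> ('k::field, ('k poly \<Rightarrow> 'k poly) set) lie_alg" where
  "HH1 m = lquot (Der_lie m) (inner_ders m)"

definition Witt11 :: "('k::field, 'k poly \<Rightarrow> 'k poly) lie_alg" where
  "Witt11 = Der_lie CHAR('k)"

end

theory Submission
  imports Defs
begin

(* Since Lambda = k[a]/(a^m) is commutative, HH^1 is Der(Lambda) itself. As p divides m, the
   derivative of a^m vanishes, so f |-> h f' mod a^m is a derivation for every h, and every
   derivation D has this form with h = D a. Hence HH^1 is the Lie algebra of vector fields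
   h d/da on Lambda with bracket [g, h] = g h' - h g'; for m = p this is W(1,1) itself.
   If m = p > 2 it is simple: ad 1 = d/da lowers degrees, so a nonzero ideal contains 1, and
   brackets with 1 and a then produce every a^k d/da (the top one because 2 <> 0 in k).
   Otherwise there is a nonzero abelian ideal, so HH^1 is not even semisimple: the constant
   fields if m = p = 2, and a^(m-p) Lambda d/da if m >= 2p, because (a^(m-p))' = 0 and
   a^(2(m-p)) = 0. Finally a simple algebra is perfect, hence semisimple. *)

section \<open>Solvable radical and simplicity\<close>

lemma lspan_superset: "X \<subseteq> lspan L X"
  by (auto simp: lspan_def)

lemma lspan_least: "lsubspace L S \<Longrightarrow> X \<subseteq> S \<Longrightarrow> lspan L X \<subseteq> S"
  by (auto simp: lspan_def)

lemma lsubspace_lspan: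
  assumes "lsubspace L (lcarrier L)" "X \<subseteq> lcarrier L"
  shows "lsubspace L (lspan L X)"
  using assms unfolding lspan_def lsubspace_def by blast

lemma lspan_eq_zero:
  assumes "lsubspace L {lzero L}" "X \<subseteq> {lzero L}"
  shows "lspan L X = {lzero L}"
  using lspan_least[OF assms] by (auto simp: lspan_def lsubspace_def)

lemma lsemisimple_if_lsimple:
  assumes carrier: "lsubspace L (lcarrier L)" and zero: "lsubspace L {lzero L}"
    and closed: "\<And>x y. x \<in> lcarrier L \<Longrightarrow> y \<in> lcarrier L \<Longrightarrow> lbr L x y \<in> lcarrier L"
    and simple: "lsimple L"
  shows "lsemisimple L"
proof -
  let ?brackets = "{lbr L x y |x y. x \<in> lcarrier L \<and> y \<in> lcarrier L}"
  obtain x y where xy: "x \<in> lcarrier L" "y \<in> lcarrier L" "lbr L x y \<noteq> lzero L"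
    using simple by (auto simp: lsimple_def)
  have "lsubspace L (lderived L (lcarrier L))"
    unfolding lderived_def using carrier closed by (intro lsubspace_lspan) auto
  moreover have brackets_derived: "?brackets \<subseteq> lderived L (lcarrier L)"
    unfolding lderived_def by (rule lspan_superset)
  moreover have "lderived L (lcarrier L) \<subseteq> lcarrier L"
    using calculation by (simp add: lsubspace_def)
  ultimately have "lideal L (lderived L (lcarrier L))"
    by (auto simp: lideal_def)
  moreover have "lderived L (lcarrier L) \<noteq> {lzero L}"
    using xy brackets_derived by blast
  ultimately have perfect: "lderived L (lcarrier L) = lcarrier L"
    using simple by (auto simp: lsimple_def)
  have "(lderived L ^^ n) (lcarrier L) = lcarrier L" for n
    by (induction n) (simp_all add: perfect)
  then have "\<not> lsolvable_ideal L (lcarrier L)"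
    using xy closed by (auto simp: lsolvable_ideal_def)
  then have "\<Union> {I. lsolvable_ideal L I} \<subseteq> {lzero L}"
    using simple by (auto simp: lsimple_def lsolvable_ideal_def)
  then show ?thesis
    unfolding lsemisimple_def lradical_def by (rule lspan_eq_zero[OF zero])
qed

lemma not_lsemisimple_if_abelian_ideal:
  assumes zero: "lsubspace L {lzero L}" and ideal: "lideal L I"
    and abelian: "\<And>x y. x \<in> I \<Longrightarrow> y \<in> I \<Longrightarrow> lbr L x y = lzero L"
    and nonzero: "x \<in> I" "x \<noteq> lzero L"
  shows "\<not> lsemisimple L"
proof
  have "{lbr L x y |x y. x \<in> I \<and> y \<in> I} \<subseteq> {lzero L}"
    using abelian by blast
  then have "(lderived L ^^ 1) I = {lzero L}"
    by (simp add: lderived_def lspan_eq_zero[OF zero])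
  then have "I \<subseteq> lradical L"
    using ideal unfolding lradical_def lsolvable_ideal_def
    by (blast intro: lspan_superset[THEN subsetD])
  moreover assume "lsemisimple L"
  ultimately show False
    using nonzero by (auto simp: lsemisimple_def)
qed

lemma lideal_image_lie_iso:
  assumes iso: "lie_iso L M f" and zero: "f (lzero L) = lzero M" and I: "lideal L I"
  shows "lideal M (f ` I)"
proof -
  have I_sub: "I \<subseteq> lcarrier L" and zero_in: "lzero L \<in> I"
    and I_add: "\<And>x y. x \<in> I \<Longrightarrow> y \<in> I \<Longrightarrow> ladd L x y \<in> I"
    and I_smult: "\<And>c x. x \<in> I \<Longrightarrow> lsmult L c x \<in> I"
    and I_br: "\<And>x y. x \<in> lcarrier L \<Longrightarrow> y \<in> I \<Longrightarrow> lbr L x y \<in> I"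
    using I by (auto simp: lideal_def lsubspace_def)
  have img: "f ` lcarrier L = lcarrier M"
    using iso by (simp add: lie_iso_def bij_betw_def)
  have f_add: "\<And>x y. x \<in> I \<Longrightarrow> y \<in> I \<Longrightarrow> f (ladd L x y) = ladd M (f x) (f y)"
    and f_smult: "\<And>c x. x \<in> I \<Longrightarrow> f (lsmult L c x) = lsmult M c (f x)"
    and f_br: "\<And>x y. x \<in> lcarrier L \<Longrightarrow> y \<in> I \<Longrightarrow> f (lbr L x y) = lbr M (f x) (f y)"
    using iso I_sub unfolding lie_iso_def by blast+
  show ?thesis
    unfolding lideal_def lsubspace_def
  proof (intro conjI ballI allI)
    show "f ` I \<subseteq> lcarrier M"
      using img I_sub by blast
    show "lzero M \<in> f ` I"
      using zero zero_in by (metis image_eqI)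
  next
    fix a b assume "a \<in> f ` I" "b \<in> f ` I"
    then obtain x y where "x \<in> I" "y \<in> I" "a = f x" "b = f y"
      by blast
    then show "ladd M a b \<in> f ` I"
      using f_add I_add by (metis image_eqI)
  next
    fix c a assume "a \<in> f ` I"
    then obtain x where "x \<in> I" "a = f x"
      by blast
    then show "lsmult M c a \<in> f ` I"
      using f_smult I_smult by (metis image_eqI)
  next
    fix a b assume "a \<in> lcarrier M" "b \<in> f ` I"
    then obtain x y where "x \<in> lcarrier L" "y \<in> I" "a = f x" "b = f y"
      using img by blast
    then show "lbr M a b \<in> f ` I"
      using f_br I_br by (metis image_eqI)
  qed
qed

lemma lsimple_if_lie_iso:
  assumes iso: "lie_iso L M f" and zero: "f (lzero L) = lzero M"
    and zero_in: "lzero L \<in> lcarrier L" and simple: "lsimple M"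
  shows "lsimple L"
proof -
  have inj: "inj_on f (lcarrier L)" and img: "f ` lcarrier L = lcarrier M"
    and f_br: "\<And>x y. x \<in> lcarrier L \<Longrightarrow> y \<in> lcarrier L \<Longrightarrow> f (lbr L x y) = lbr M (f x) (f y)"
    using iso by (auto simp: lie_iso_def bij_betw_def)
  show ?thesis
    unfolding lsimple_def
  proof (intro conjI allI impI)
    obtain x y where "x \<in> lcarrier M" "y \<in> lcarrier M" "lbr M x y \<noteq> lzero M"
      using simple by (auto simp: lsimple_def)
    moreover obtain x' y' where "x' \<in> lcarrier L" "y' \<in> lcarrier L" "x = f x'" "y = f y'"
      using img calculation(1,2) by blast
    ultimately show "\<exists>x\<in>lcarrier L. \<exists>y\<in>lcarrier L. lbr L x y \<noteq> lzero L"
      using f_br zero by metis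
  next
    fix I assume I: "lideal L I"
    then have I_sub: "I \<subseteq> lcarrier L" and zero_mem: "lzero L \<in> I"
      by (auto simp: lideal_def lsubspace_def)
    have "f ` I = {lzero M} \<or> f ` I = lcarrier M"
      using simple lideal_image_lie_iso[OF iso zero I] by (simp add: lsimple_def)
    then show "I = {lzero L} \<or> I = lcarrier L"
    proof
      assume image_zero: "f ` I = {lzero M}"
      have "y = lzero L" if "y \<in> I" for y
        using inj_onD[OF inj, of y "lzero L"] that I_sub zero_in zero image_zero by auto
      then show ?thesis
        using zero_mem by blast
    next
      assume "f ` I = lcarrier M"
      then show ?thesis
        using inj_on_image_eq_iff[OF inj I_sub, of "lcarrier L"] img by blast
    qed
  qed
qed

lemma monom_in_tcarrier: "k < m \<Longrightarrow> monom c k \<in> tcarrier m"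
  by (auto simp: tcarrier_def intro: le_less_trans[OF degree_monom_le])

lemma zero_in_tcarrier: "0 < m \<Longrightarrow> 0 \<in> tcarrier m"
  by (simp add: tcarrier_def)

lemma one_in_tcarrier: "0 < m \<Longrightarrow> 1 \<in> tcarrier m"
  by (simp add: tcarrier_def)

lemma add_in_tcarrier: "g \<in> tcarrier m \<Longrightarrow> h \<in> tcarrier m \<Longrightarrow> g + h \<in> tcarrier m"
  by (auto simp: tcarrier_def intro: le_less_trans[OF degree_add_le_max])

lemma smult_in_tcarrier: "h \<in> tcarrier m \<Longrightarrow> smult c h \<in> tcarrier m"
  by (auto simp: tcarrier_def intro: le_less_trans[OF degree_smult_le])

lemma degree_pderiv_le: "degree (pderiv p) \<le> degree p - 1"
  by (rule degree_le) (auto simp: coeff_pderiv coeff_eq_0)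

lemma pderiv_in_tcarrier: "h \<in> tcarrier m \<Longrightarrow> pderiv h \<in> tcarrier m"
  by (auto simp: tcarrier_def intro: le_less_trans[OF degree_pderiv_le])

lemma sum_in_tcarrier: "0 < m \<Longrightarrow> (\<And>i. i \<in> A \<Longrightarrow> f i \<in> tcarrier m) \<Longrightarrow> sum f A \<in> tcarrier m"
  by (induction A rule: infinite_finite_induct) (simp_all add: zero_in_tcarrier add_in_tcarrier)

lemma mod_monom_in_tcarrier: "0 < m \<Longrightarrow> f mod monom 1 m \<in> tcarrier m"
  by (metis tcarrier_def mem_Collect_eq degree_0 degree_mod_less' degree_monom_eq monom_eq_0_iff one_neq_zero)

lemma mod_monom_eq_self: "f \<in> tcarrier m \<Longrightarrow> f mod monom 1 m = f"
  by (simp add: tcarrier_def mod_poly_less degree_monom_eq)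

lemma pderiv_monom_eq_0: "CHAR('k) dvd m \<Longrightarrow> pderiv (monom 1 m :: 'k::field poly) = 0"
  by (simp add: pderiv_monom of_nat_eq_0_iff_char_dvd)

lemma pderiv_mod_monom_mult:
  assumes "CHAR('k) dvd m"
  shows "(pderiv (f mod monom 1 m) * g) mod monom 1 m = (pderiv f * g) mod (monom 1 m :: 'k::field poly)"
proof -
  have "pderiv f = pderiv (f div monom 1 m) * monom 1 m + pderiv (f mod monom 1 m)"
    by (subst div_mult_mod_eq[symmetric, of f "monom 1 m"])
      (simp add: pderiv_add pderiv_mult pderiv_monom_eq_0[OF assms])
  then have "pderiv f * g = (pderiv (f div monom 1 m) * g) * monom 1 m + pderiv (f mod monom 1 m) * g"
    by (simp add: algebra_simps)
  then show ?thesis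
    by simp
qed

section \<open>Vector fields on the truncated polynomial algebra\<close>

definition vf_der :: "nat \<Rightarrow> 'k::field poly \<Rightarrow> 'k poly \<Rightarrow> 'k poly" where
  "vf_der m h = (\<lambda>f. if f \<in> tcarrier m then (pderiv f * h) mod monom 1 m else 0)"

definition vf_bracket :: "nat \<Rightarrow> 'k::field poly \<Rightarrow> 'k poly \<Rightarrow> 'k poly" where
  "vf_bracket m g h = (g * pderiv h - h * pderiv g) mod monom 1 m"

lemma vf_bracket_in_tcarrier: "0 < m \<Longrightarrow> vf_bracket m g h \<in> tcarrier m"
  by (simp add: vf_bracket_def mod_monom_in_tcarrier)

lemma vf_bracket_one_left: "h \<in> tcarrier m \<Longrightarrow> vf_bracket m 1 h = pderiv h"
  by (simp add: vf_bracket_def mod_monom_eq_self pderiv_in_tcarrier)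

lemma vf_bracket_monom:
  assumes "0 < m" "i + j \<le> m"
  shows "vf_bracket m (monom 1 i) (monom 1 j :: 'k::field poly)
       = smult (of_nat j - of_nat i) (monom 1 (i + j - 1))"
proof -
  have "monom 1 i * pderiv (monom 1 j) = (monom (of_nat j) (i + j - 1) :: 'k poly)"
    by (cases j) (simp_all add: pderiv_monom mult_monom)
  moreover have "monom 1 j * pderiv (monom 1 i) = (monom (of_nat i) (i + j - 1) :: 'k poly)"
    by (cases i) (simp_all add: pderiv_monom mult_monom add.commute)
  moreover have "smult c (monom 1 (i + j - 1)) \<in> tcarrier m" for c :: 'k
    using assms by (intro smult_in_tcarrier monom_in_tcarrier) linarith
  ultimately show ?thesis
    by (simp add: vf_bracket_def smult_monom diff_monom mod_monom_eq_self)
qed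

lemma vf_der_in_der_set:
  assumes "CHAR('k) dvd m" "0 < m"
  shows "vf_der m (h :: 'k::field poly) \<in> der_set m"
proof -
  have "vf_der m h (tmult m f g) = tmult m f (vf_der m h g) + tmult m (vf_der m h f) g"
    if "f \<in> tcarrier m" "g \<in> tcarrier m" for f g
  proof -
    have "vf_der m h (tmult m f g) = (pderiv (f * g) * h) mod monom 1 m"
      using pderiv_mod_monom_mult[OF assms(1), of "f * g" h]
      by (simp add: vf_der_def tmult_def mod_monom_in_tcarrier[OF assms(2)])
    also have "\<dots> = (f * (pderiv g * h) + (pderiv f * h) * g) mod monom 1 m"
      by (simp add: pderiv_mult algebra_simps)
    also have "\<dots> = (f * ((pderiv g * h) mod monom 1 m)) mod monom 1 m
                     + (((pderiv f * h) mod monom 1 m) * g) mod monom 1 m"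
      by (simp add: poly_mod_add_left mod_mult_left_eq mod_mult_right_eq)
    finally show ?thesis
      using that by (simp add: vf_der_def tmult_def)
  qed
  then show ?thesis
    by (auto simp: der_set_def vf_der_def add_in_tcarrier smult_in_tcarrier pderiv_add pderiv_smult
        algebra_simps poly_mod_add_left mod_smult_left mod_monom_in_tcarrier[OF assms(2)]
        zero_in_tcarrier[OF assms(2)])
qed

lemma vf_der_x: "1 < m \<Longrightarrow> h \<in> tcarrier m \<Longrightarrow> vf_der m h (monom 1 1) = h"
  by (simp add: vf_der_def monom_in_tcarrier mod_monom_eq_self pderiv_monom)

lemma inj_on_vf_der: "1 < m \<Longrightarrow> inj_on (vf_der m) (tcarrier m)"
  by (metis vf_der_x inj_onI)

lemma der_set_const:
  assumes "0 < m" and D: "D \<in> der_set m"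
  shows "D [:c:] = (0 :: 'k::field poly)"
proof -
  have one: "1 \<in> tcarrier m" "D 1 \<in> tcarrier m"
    using assms by (simp_all add: one_in_tcarrier der_set_def)
  have "D (tmult m 1 1) = tmult m 1 (D 1) + tmult m (D 1) 1"
    using D one(1) unfolding der_set_def by blast
  then have "D 1 = tmult m 1 (D 1) + tmult m (D 1) 1"
    by (simp add: tmult_def mod_monom_eq_self[OF one(1)] del: mult_1_left)
  also have "\<dots> = D 1 + D 1"
    by (simp add: tmult_def mod_monom_eq_self[OF one(2)])
  finally have "D 1 = 0"
    by (metis add_cancel_left_right)
  moreover have "D (smult c 1) = smult c (D 1)"
    using D one(1) unfolding der_set_def by blast
  ultimately show ?thesis
    by simp
qed

lemma der_set_eq_vf_der:
  assumes "CHAR('k) dvd m" "1 < m" and D: "D \<in> der_set m"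
  shows "D = vf_der m (D (monom 1 1 :: 'k::field poly))"
proof -
  let ?x = "[:0, 1:] :: 'k poly"
  have x_eq: "monom 1 1 = ?x"
    by (simp add: monom_Suc)
  have x: "?x \<in> tcarrier m"
    using assms(2) by (simp add: tcarrier_def)
  have D_add: "\<And>f g. f \<in> tcarrier m \<Longrightarrow> g \<in> tcarrier m \<Longrightarrow> D (f + g) = D f + D g"
    and D_leibniz: "\<And>f g. f \<in> tcarrier m \<Longrightarrow> g \<in> tcarrier m \<Longrightarrow>
        D (tmult m f g) = tmult m f (D g) + tmult m (D f) g"
    using D by (simp_all add: der_set_def)
  have D_const: "D [:c:] = 0" for c
    using assms(2) D by (intro der_set_const) simp_all
  have "D f = (pderiv f * D ?x) mod monom 1 m" if "f \<in> tcarrier m" for f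
    using that
  proof (induction f rule: pCons_induct)
    case (pCons a p)
    show ?case
    proof (cases "p = 0")
      case False
      have p: "p \<in> tcarrier m" "?x * p \<in> tcarrier m"
        using pCons.prems False by (simp_all add: tcarrier_def)
      have "D (pCons a p) = D [:a:] + D (tmult m ?x p)"
        using D_add[of "[:a:]" "?x * p"] p by (simp add: tmult_def mod_monom_eq_self tcarrier_def)
      also have "\<dots> = (?x * ((pderiv p * D ?x) mod monom 1 m)) mod monom 1 m + (D ?x * p) mod monom 1 m"
        using D_leibniz[OF x p(1)] pCons.IH[OF p(1)] D_const[of a] by (simp add: tmult_def)
      also have "\<dots> = (?x * (pderiv p * D ?x) + D ?x * p) mod monom 1 m"
        by (simp only: mod_mult_right_eq poly_mod_add_left)
      also have "?x * (pderiv p * D ?x) + D ?x * p = pderiv (pCons a p) * D ?x"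
        by (simp add: pderiv_pCons algebra_simps)
      finally show ?thesis .
    qed (simp add: D_const)
  qed (simp add: D_const[of 0, simplified])
  then show ?thesis
    unfolding x_eq using D by (intro ext) (auto simp: vf_der_def der_set_def)
qed

lemma der_set_eq_image_vf_der:
  assumes "CHAR('k) dvd m" "1 < m"
  shows "der_set m = vf_der m ` (tcarrier m :: 'k::field poly set)"
proof -
  have "D (monom 1 1) \<in> tcarrier m" if "D \<in> der_set m" for D :: "'k poly \<Rightarrow> 'k poly"
    using that assms(2) monom_in_tcarrier[of 1 m 1] unfolding der_set_def by blast
  then show ?thesis
    using der_set_eq_vf_der[OF assms] vf_der_in_der_set[OF assms(1)] assms(2) by force
qed

lemma vf_der_add: "(\<lambda>f. vf_der m g f + vf_der m h f) = vf_der m (g + h)"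
  by (auto simp: vf_der_def algebra_simps poly_mod_add_left)

lemma vf_der_smult: "(\<lambda>f. smult c (vf_der m h f)) = vf_der m (smult c h)"
  by (auto simp: vf_der_def mod_smult_left)

lemma vf_der_zero: "vf_der m 0 = (\<lambda>_. 0)"
  by (auto simp: vf_der_def)

lemma vf_der_commutator:
  assumes "CHAR('k) dvd m" "0 < m"
  shows "(\<lambda>f. vf_der m g (vf_der m h f) - vf_der m h (vf_der m g f))
       = vf_der m (vf_bracket m g (h :: 'k::field poly))"
proof
  fix f :: "'k poly"
  show "vf_der m g (vf_der m h f) - vf_der m h (vf_der m g f) = vf_der m (vf_bracket m g h) f"
  proof (cases "f \<in> tcarrier m")
    case True
    have "vf_der m g (vf_der m h f) - vf_der m h (vf_der m g f)
        = (pderiv (pderiv f * h) * g - pderiv (pderiv f * g) * h) mod monom 1 m"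
      using True by (simp add: vf_der_def mod_monom_in_tcarrier[OF assms(2)]
          pderiv_mod_monom_mult[OF assms(1)] poly_mod_diff_left)
    also have "pderiv (pderiv f * h) * g - pderiv (pderiv f * g) * h
             = pderiv f * (g * pderiv h - h * pderiv g)"
      by (simp add: pderiv_mult algebra_simps)
    finally show ?thesis
      using True by (simp add: vf_der_def vf_bracket_def mod_mult_right_eq)
  qed (simp add: vf_der_def zero_in_tcarrier[OF assms(2)])
qed

lemma inner_ders_eq_zero: "0 < m \<Longrightarrow> inner_ders m = {\<lambda>_. 0}"
  by (auto simp: inner_ders_def tmult_def mult.commute intro!: exI[of _ 0] zero_in_tcarrier)

(* \<phi> identifies L with the Lie algebra of vector fields h d/dx on k[x]/(x^m), deg h < m. *)
locale vf_model =
  fixes m :: nat and L :: "('k::field, 'a) lie_alg" and \<phi> :: "'k poly \<Rightarrow> 'a"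
  assumes m_pos: "0 < m"
    and carrier_eq: "lcarrier L = \<phi> ` tcarrier m"
    and inj: "inj_on \<phi> (tcarrier m)"
    and zero_eq: "lzero L = \<phi> 0"
    and add_eq: "\<And>g h. g \<in> tcarrier m \<Longrightarrow> h \<in> tcarrier m \<Longrightarrow> ladd L (\<phi> g) (\<phi> h) = \<phi> (g + h)"
    and smult_eq: "\<And>c h. h \<in> tcarrier m \<Longrightarrow> lsmult L c (\<phi> h) = \<phi> (smult c h)"
    and bracket_eq: "\<And>g h. g \<in> tcarrier m \<Longrightarrow> h \<in> tcarrier m \<Longrightarrow>
      lbr L (\<phi> g) (\<phi> h) = \<phi> (vf_bracket m g h)"
begin

lemma image_in_carrier: "h \<in> tcarrier m \<Longrightarrow> \<phi> h \<in> lcarrier L"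
  by (simp add: carrier_eq)

lemma image_eq_iff: "g \<in> tcarrier m \<Longrightarrow> h \<in> tcarrier m \<Longrightarrow> \<phi> g = \<phi> h \<longleftrightarrow> g = h"
  using inj by (auto dest: inj_onD)

lemma zero_in_carrier: "lzero L \<in> lcarrier L"
  by (simp add: zero_eq image_in_carrier zero_in_tcarrier[OF m_pos])

lemma image_eq_zero_iff: "h \<in> tcarrier m \<Longrightarrow> \<phi> h = lzero L \<longleftrightarrow> h = 0"
  by (simp add: zero_eq image_eq_iff zero_in_tcarrier[OF m_pos])

lemma lsubspace_carrier: "lsubspace L (lcarrier L)"
  by (auto simp: lsubspace_def carrier_eq zero_eq add_eq smult_eq add_in_tcarrier smult_in_tcarrier
      zero_in_tcarrier[OF m_pos])

lemma lsubspace_zero: "lsubspace L {lzero L}"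
  by (simp add: lsubspace_def zero_eq add_eq smult_eq image_in_carrier zero_in_tcarrier[OF m_pos])

lemma bracket_closed: "x \<in> lcarrier L \<Longrightarrow> y \<in> lcarrier L \<Longrightarrow> lbr L x y \<in> lcarrier L"
  by (auto simp: carrier_eq bracket_eq vf_bracket_in_tcarrier[OF m_pos])

lemma lsemisimple_if_lsimple: "lsimple L \<Longrightarrow> lsemisimple L"
  by (rule lsemisimple_if_lsimple[OF lsubspace_carrier lsubspace_zero bracket_closed])

lemma image_mem_if_smult_mem:
  assumes S: "lsubspace L S" and h: "h \<in> tcarrier m" and c: "c \<noteq> 0"
    and mem: "\<phi> (smult c h) \<in> S"
  shows "\<phi> h \<in> S"
proof -
  have "lsmult L (inverse c) (\<phi> (smult c h)) \<in> S"
    using S mem by (simp add: lsubspace_def)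
  then show ?thesis
    using smult_eq[OF smult_in_tcarrier[OF h]] c by simp
qed

lemma image_sum_monom_mem:
  assumes S: "lsubspace L S" and monoms: "\<And>k. k < m \<Longrightarrow> \<phi> (monom 1 k) \<in> S"
    and A: "A \<subseteq> {..<m}"
  shows "\<phi> (\<Sum>i\<in>A. monom (c i) i) \<in> S"
  using finite_subset[OF A finite_lessThan] A
proof (induction A rule: finite_induct)
  case empty
  then show ?case
    using S by (simp add: zero_eq[symmetric] lsubspace_def)
next
  case (insert i A)
  let ?s = "\<Sum>i\<in>A. monom (c i) i"
  have T: "monom (c i) i \<in> tcarrier m" "monom 1 i \<in> tcarrier m" "?s \<in> tcarrier m"
    using insert.prems by (simp_all add: monom_in_tcarrier sum_in_tcarrier m_pos subset_iff)
  have "lsmult L (c i) (\<phi> (monom 1 i)) \<in> S"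
    using S monoms[of i] insert.prems by (simp add: lsubspace_def)
  then have "\<phi> (monom (c i) i) \<in> S"
    using smult_eq[OF T(2), of "c i"] by (simp add: smult_monom)
  then have "ladd L (\<phi> (monom (c i) i)) (\<phi> ?s) \<in> S"
    using S insert by (simp add: lsubspace_def)
  then show ?case
    using insert(1,2) add_eq[OF T(1,3)] by simp
qed

lemma carrier_subset_if_monoms:
  assumes S: "lsubspace L S" and monoms: "\<And>k. k < m \<Longrightarrow> \<phi> (monom 1 k) \<in> S"
  shows "lcarrier L \<subseteq> S"
proof -
  have "\<phi> h \<in> S" if "h \<in> tcarrier m" for h
  proof -
    have "degree h \<le> m - 1"
      using that by (simp add: tcarrier_def)
    then have "h = (\<Sum>i\<le>m - 1. monom (coeff h i) i)"
      by (simp add: poly_as_sum_of_monoms')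
    moreover have "{..m - 1} \<subseteq> {..<m}"
      using m_pos by auto
    ultimately show ?thesis
      using image_sum_monom_mem[OF S monoms] by metis
  qed
  then show ?thesis
    by (auto simp: carrier_eq)
qed

lemma bracket_image_mem_lideal:
  assumes I: "lideal L I" and g: "g \<in> tcarrier m" and h: "h \<in> tcarrier m" "\<phi> h \<in> I"
  shows "\<phi> (vf_bracket m g h) \<in> I"
  using I h image_in_carrier[OF g] bracket_eq[OF g h(1)] unfolding lideal_def by metis

lemma lideal_image:
  fixes J :: "'k poly set"
  assumes sub: "J \<subseteq> tcarrier m" and zero: "0 \<in> J"
    and add: "\<And>g h. g \<in> J \<Longrightarrow> h \<in> J \<Longrightarrow> g + h \<in> J"
    and smult: "\<And>c h. h \<in> J \<Longrightarrow> smult c h \<in> J"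
    and bracket: "\<And>g h. g \<in> tcarrier m \<Longrightarrow> h \<in> J \<Longrightarrow> vf_bracket m g h \<in> J"
  shows "lideal L (\<phi> ` J)"
  unfolding lideal_def lsubspace_def
proof (intro conjI ballI allI)
  show "\<phi> ` J \<subseteq> lcarrier L" "lzero L \<in> \<phi> ` J"
    using sub zero by (auto simp: carrier_eq zero_eq)
next
  fix x y assume "x \<in> \<phi> ` J" "y \<in> \<phi> ` J"
  then show "ladd L x y \<in> \<phi> ` J"
    using sub add by (auto simp: add_eq subset_iff)
next
  fix c x assume "x \<in> \<phi> ` J"
  then show "lsmult L c x \<in> \<phi> ` J"
    using sub smult by (auto simp: smult_eq subset_iff)
next
  fix x y assume "x \<in> lcarrier L" "y \<in> \<phi> ` J"
  then show "lbr L x y \<in> \<phi> ` J"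
    using sub bracket by (auto simp: carrier_eq bracket_eq subset_iff)
qed

lemma not_lsemisimple_if_abelian_vf_ideal:
  fixes J :: "'k poly set"
  assumes sub: "J \<subseteq> tcarrier m" and zero: "0 \<in> J"
    and add: "\<And>g h. g \<in> J \<Longrightarrow> h \<in> J \<Longrightarrow> g + h \<in> J"
    and smult: "\<And>c h. h \<in> J \<Longrightarrow> smult c h \<in> J"
    and bracket: "\<And>g h. g \<in> tcarrier m \<Longrightarrow> h \<in> J \<Longrightarrow> vf_bracket m g h \<in> J"
    and abelian: "\<And>g h. g \<in> J \<Longrightarrow> h \<in> J \<Longrightarrow> vf_bracket m g h = 0"
    and nonzero: "h \<in> J" "h \<noteq> 0"
  shows "\<not> lsemisimple L"
proof (rule not_lsemisimple_if_abelian_ideal[OF lsubspace_zero])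
  show "lideal L (\<phi> ` J)"
    by (rule lideal_image[OF sub zero add smult bracket])
  show "lbr L x y = lzero L" if "x \<in> \<phi> ` J" "y \<in> \<phi> ` J" for x y
    using that sub abelian by (auto simp: bracket_eq zero_eq subset_iff)
  show "\<phi> h \<in> \<phi> ` J" "\<phi> h \<noteq> lzero L"
    using nonzero sub image_eq_zero_iff by auto
qed


lemma lie_iso_zero:
  assumes M: "vf_model n M \<psi>" and iso: "lie_iso L M f"
  shows "f (lzero L) = lzero M"
proof -
  have "f (lzero L) \<in> lcarrier M"
    using iso zero_in_carrier unfolding lie_iso_def bij_betw_def by blast
  then obtain h where h: "h \<in> tcarrier n" "f (lzero L) = \<psi> h"
    using vf_model.carrier_eq[OF M] by blast
  have "ladd L (lzero L) (lzero L) = lzero L"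
    by (simp add: zero_eq add_eq zero_in_tcarrier[OF m_pos])
  then have "f (lzero L) = ladd M (f (lzero L)) (f (lzero L))"
    using iso zero_in_carrier unfolding lie_iso_def by metis
  then have "\<psi> h = \<psi> (h + h)"
    using h vf_model.add_eq[OF M h(1) h(1)] by simp
  then have "h = h + h"
    using vf_model.image_eq_iff[OF M h(1) add_in_tcarrier[OF h(1) h(1)]] by blast
  then have "h = 0"
    by (metis add_cancel_left_right)
  then show ?thesis
    using h vf_model.zero_eq[OF M] by simp
qed

lemma lie_isomorphic:
  assumes M: "vf_model m M \<psi>"
  shows "lie_isomorphic L M"
proof -
  let ?f = "\<lambda>x. \<psi> (inv_into (tcarrier m) \<phi> x)"
  have f_image: "?f (\<phi> h) = \<psi> h" if "h \<in> tcarrier m" for h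
    using inv_into_f_f[OF inj that] by simp
  have "bij_betw ?f (lcarrier L) (lcarrier M)"
    unfolding carrier_eq vf_model.carrier_eq[OF M]
    by (rule bij_betw_imageI)
      (auto simp: inj_on_def f_image image_eq_iff vf_model.image_eq_iff[OF M] image_iff)
  then have "lie_iso L M ?f"
    by (auto simp: lie_iso_def carrier_eq f_image add_eq smult_eq bracket_eq
        vf_model.add_eq[OF M] vf_model.smult_eq[OF M] vf_model.bracket_eq[OF M]
        add_in_tcarrier smult_in_tcarrier vf_bracket_in_tcarrier[OF m_pos])
  then show ?thesis
    unfolding lie_isomorphic_def by blast
qed

end

section \<open>Simplicity of the Witt algebra\<close>

locale witt_model = vf_model m L \<phi>
  for m :: nat and L :: "('k::field, 'a) lie_alg" and \<phi> :: "'k poly \<Rightarrow> 'a" +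
  assumes char_eq: "CHAR('k) = m" and two_less: "2 < m"
begin

lemma of_nat_neq_0: "0 < n \<Longrightarrow> n < m \<Longrightarrow> (of_nat n :: 'k) \<noteq> 0"
  using char_eq by (auto simp: of_nat_eq_0_iff_char_dvd dest: dvd_imp_le)

(* ad 1 = d/dx lowers the degree by exactly one, as long as the degree is below p. *)
lemma one_mem_lideal:
  assumes I: "lideal L I" and h: "h \<in> tcarrier m" "h \<noteq> 0" "\<phi> h \<in> I"
  shows "\<phi> 1 \<in> I"
  using h
proof (induction "degree h" arbitrary: h)
  case 0
  then obtain c where "h = smult c 1" "c \<noteq> 0"
    by (metis degree_eq_zeroE pCons_0_0 smult_one)
  then show ?case
    using 0 I image_mem_if_smult_mem[of I 1 c] one_in_tcarrier[OF m_pos]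
    by (simp add: lideal_def)
next
  case (Suc n)
  have "Suc n < m"
    using Suc.hyps(2) Suc.prems(1) by (simp add: tcarrier_def)
  then have "coeff (pderiv h) n \<noteq> 0"
    using of_nat_neq_0[of "Suc n"] Suc.hyps(2) Suc.prems(2) by (simp add: coeff_pderiv)
  then have "degree (pderiv h) = n" "pderiv h \<noteq> 0"
    using degree_pderiv_le[of h] Suc.hyps(2) le_degree[of "pderiv h" n] by auto
  moreover have "\<phi> (pderiv h) \<in> I"
    using bracket_image_mem_lideal[OF I one_in_tcarrier[OF m_pos] Suc.prems(1,3)] Suc.prems(1)
    by (simp add: vf_bracket_one_left)
  ultimately show ?case
    using Suc.hyps(1) Suc.prems(1) pderiv_in_tcarrier by metis
qed

lemma monom_mem_lideal_below:
  assumes I: "lideal L I" and one: "\<phi> 1 \<in> I" and k: "Suc k < m"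
  shows "\<phi> (monom 1 k) \<in> I"
proof -
  have "vf_bracket m (monom 1 (Suc k)) 1 = smult (- of_nat (Suc k)) (monom 1 k :: 'k poly)"
    using vf_bracket_monom[of m "Suc k" 0] k m_pos by (simp add: one_pCons)
  then have "\<phi> (smult (- of_nat (Suc k)) (monom 1 k)) \<in> I"
    using bracket_image_mem_lideal[OF I monom_in_tcarrier[OF k, of 1] one_in_tcarrier[OF m_pos] one]
    by simp
  moreover have "(- of_nat (Suc k) :: 'k) \<noteq> 0"
    using of_nat_neq_0[of "Suc k"] k by (metis neg_equal_0_iff_equal zero_less_Suc)
  moreover have "lsubspace L I"
    using I by (simp add: lideal_def)
  ultimately show ?thesis
    using image_mem_if_smult_mem monom_in_tcarrier[OF Suc_lessD[OF k]] by blast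
qed

lemma top_monom_mem_lideal:
  assumes I: "lideal L I" and x: "\<phi> (monom 1 1) \<in> I"
  shows "\<phi> (monom 1 (m - 1)) \<in> I"
proof -
  have T: "monom 1 1 \<in> tcarrier m" "monom 1 (m - 1) \<in> tcarrier m"
    using two_less by (simp_all add: monom_in_tcarrier)
  have "(of_nat m :: 'k) = 0"
    using char_eq by (metis of_nat_CHAR)
  then have "vf_bracket m (monom 1 (m - 1)) (monom 1 1) = smult 2 (monom 1 (m - 1) :: 'k poly)"
    using vf_bracket_monom[of m "m - 1" 1, where 'k = 'k] two_less by simp
  then have "\<phi> (smult 2 (monom 1 (m - 1))) \<in> I"
    using bracket_image_mem_lideal[OF I T(2) T(1) x] by simp
  moreover have "(2 :: 'k) \<noteq> 0"
    using of_nat_neq_0[of 2] two_less by simp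
  moreover have "lsubspace L I"
    using I by (simp add: lideal_def)
  ultimately show ?thesis
    using image_mem_if_smult_mem T(2) by blast
qed

lemma carrier_subset_lideal:
  assumes I: "lideal L I" and one: "\<phi> 1 \<in> I"
  shows "lcarrier L \<subseteq> I"
proof (rule carrier_subset_if_monoms)
  show "lsubspace L I"
    using I by (simp add: lideal_def)
  fix k assume "k < m"
  then consider "Suc k < m" | "k = m - 1"
    by linarith
  then show "\<phi> (monom 1 k) \<in> I"
    using monom_mem_lideal_below[OF I one] top_monom_mem_lideal[OF I] two_less by cases auto
qed

lemma lsimple: "lsimple L"
  unfolding lsimple_def
proof (intro conjI allI impI)
  have "vf_bracket m 1 (monom 1 1) = (1 :: 'k poly)"
    using vf_bracket_monom[of m 0 1] two_less by (simp add: one_pCons)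
  then have "lbr L (\<phi> 1) (\<phi> (monom 1 1)) = \<phi> 1"
    using bracket_eq[OF one_in_tcarrier[OF m_pos] monom_in_tcarrier, of 1 1] two_less
    by simp
  moreover have "\<phi> 1 \<noteq> lzero L"
    by (simp add: image_eq_zero_iff one_in_tcarrier[OF m_pos])
  moreover have "\<phi> 1 \<in> lcarrier L" "\<phi> (monom 1 1) \<in> lcarrier L"
    using two_less by (simp_all add: image_in_carrier one_in_tcarrier monom_in_tcarrier)
  ultimately show "\<exists>x\<in>lcarrier L. \<exists>y\<in>lcarrier L. lbr L x y \<noteq> lzero L"
    by metis
next
  fix I assume I: "lideal L I"
  then have I_sub: "I \<subseteq> lcarrier L" and "lzero L \<in> I"
    by (simp_all add: lideal_def lsubspace_def)
  show "I = {lzero L} \<or> I = lcarrier L"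
  proof (cases "I \<subseteq> {lzero L}")
    case True
    then show ?thesis
      using \<open>lzero L \<in> I\<close> by blast
  next
    case False
    then obtain h where "h \<in> tcarrier m" "h \<noteq> 0" "\<phi> h \<in> I"
      using I_sub image_eq_zero_iff by (auto simp: carrier_eq)
    then have "lcarrier L \<subseteq> I"
      using I by (intro carrier_subset_lideal one_mem_lideal)
    then show ?thesis
      using I_sub by blast
  qed
qed

end

context vf_model
begin

lemma not_lsemisimple_if_two: "m = 2 \<Longrightarrow> \<not> lsemisimple L"
proof (rule not_lsemisimple_if_abelian_vf_ideal[of "{h \<in> tcarrier m. degree h = 0}" 1])
  assume m: "m = 2"
  show "vf_bracket m g h \<in> {h \<in> tcarrier m. degree h = 0}"
    if g: "g \<in> tcarrier m" and h: "h \<in> {h \<in> tcarrier m. degree h = 0}" for g h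
  proof -
    have "degree (pderiv g) = 0"
      using degree_pderiv_le[of g] g m by (simp add: tcarrier_def)
    moreover obtain c where "h = [:c:]"
      using h by (auto elim: degree_eq_zeroE)
    ultimately have "degree (h * pderiv g) = 0"
      by simp
    then show ?thesis
      using \<open>h = [:c:]\<close> m
      by (simp add: vf_bracket_def tcarrier_def poly_mod_minus_left mod_poly_less degree_monom_eq)
  qed
qed (auto simp: tcarrier_def vf_bracket_def elim!: degree_eq_zeroE
      intro: le_less_trans[OF degree_add_le] le_less_trans[OF degree_smult_le])

lemma not_lsemisimple_if_twice_char_le:
  assumes dvd: "CHAR('k) dvd m" and char_pos: "0 < CHAR('k)" and le: "2 * CHAR('k) \<le> m"
  shows "\<not> lsemisimple L"
proof -
  define X :: "'k poly" where "X = monom 1 (m - CHAR('k))"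
  have X_deriv: "pderiv X = 0"
    unfolding X_def using dvd by (intro pderiv_monom_eq_0 dvd_diff_nat) simp_all
  have X_dvd: "X dvd monom 1 m" and X_square: "monom 1 m dvd X * X"
    unfolding X_def using le by (simp_all add: mult_monom monom_1_dvd_iff' coeff_monom)
  have X_mult: "g * pderiv (X * u) - (X * u) * pderiv g = X * (g * pderiv u - u * pderiv g)" for g u
    by (simp add: pderiv_mult X_deriv algebra_simps)
  show ?thesis
  proof (rule not_lsemisimple_if_abelian_vf_ideal[of "{h \<in> tcarrier m. X dvd h}" X])
    show "vf_bracket m g h \<in> {h \<in> tcarrier m. X dvd h}"
      if "g \<in> tcarrier m" and h: "h \<in> {h \<in> tcarrier m. X dvd h}" for g h
    proof -
      obtain u where "h = X * u"
        using h by blast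
      then have "vf_bracket m g h = (X * (g * pderiv u - u * pderiv g)) mod monom 1 m"
        by (simp only: vf_bracket_def X_mult)
      then have "X dvd vf_bracket m g h"
        using X_dvd by (simp add: dvd_mod)
      then show ?thesis
        by (simp add: vf_bracket_in_tcarrier[OF m_pos])
    qed
    show "vf_bracket m g h = 0"
      if gh: "g \<in> {h \<in> tcarrier m. X dvd h}" "h \<in> {h \<in> tcarrier m. X dvd h}" for g h
    proof -
      obtain u v where "g = X * v" "h = X * u"
        using gh by blast
      then have "g * pderiv h - h * pderiv g = (X * X) * (v * pderiv u - u * pderiv v)"
        by (simp add: pderiv_mult X_deriv algebra_simps)
      then show ?thesis
        unfolding vf_bracket_def using X_square by (simp add: dvd_imp_mod_0)
    qed
    show "X \<in> {h \<in> tcarrier m. X dvd h}"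
      unfolding X_def using char_pos le by (simp add: monom_in_tcarrier)
  qed (auto simp: X_def zero_in_tcarrier[OF m_pos] add_in_tcarrier smult_in_tcarrier dvd_smult)
qed

end

section \<open>First Hochschild cohomology\<close>

lemma vf_model_Der_lie:
  assumes "CHAR('k) dvd m" "1 < m"
  shows "vf_model m (Der_lie m :: ('k::field, _) lie_alg) (vf_der m)"
  using assms by unfold_locales
    (simp_all add: Der_lie_def der_set_eq_image_vf_der inj_on_vf_der vf_der_add vf_der_smult
      vf_der_zero vf_der_commutator)

lemma witt_model_Witt11:
  assumes "2 < CHAR('k)"
  shows "witt_model CHAR('k) (Witt11 :: ('k::field, _) lie_alg) (vf_der CHAR('k))"
  unfolding Witt11_def
proof (rule witt_model.intro)
  show "vf_model CHAR('k) (Der_lie CHAR('k) :: ('k, _) lie_alg) (vf_der CHAR('k))"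
    using assms by (intro vf_model_Der_lie) simp_all
qed (unfold_locales, use assms in simp_all)

lemma vf_model_HH1:
  assumes "CHAR('k) dvd m" "1 < m"
  shows "vf_model m (HH1 m :: ('k::field, _) lie_alg) (\<lambda>h. {vf_der m h})"
proof -
  have cosets: "lcoset (Der_lie m) (inner_ders m) D = {D}" for D :: "'k poly \<Rightarrow> 'k poly"
    using assms(2) by (simp add: lcoset_def inner_ders_eq_zero Der_lie_def)
  interpret Der: vf_model m "Der_lie m :: ('k, _) lie_alg" "vf_der m"
    using assms by (rule vf_model_Der_lie)
  show ?thesis
    using assms inj_on_vf_der[OF assms(2)]
    by unfold_locales
      (auto simp: HH1_def lquot_def cosets inj_on_def image_image Der.carrier_eq
        Der.zero_eq Der.add_eq Der.smult_eq Der.bracket_eq)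
qed

lemma lsimple_HH1:
  assumes "CHAR('k) = m" "2 < m"
  shows "lsimple (HH1 m :: ('k::field, _) lie_alg)"
proof (rule witt_model.lsimple, rule witt_model.intro)
  show "vf_model m (HH1 m :: ('k, _) lie_alg) (\<lambda>h. {vf_der m h})"
    using assms by (intro vf_model_HH1) simp_all
qed (unfold_locales, use assms in simp_all)

lemma not_lsemisimple_HH1:
  assumes "0 < CHAR('k)" "2 \<le> m" "CHAR('k) dvd m" and not_witt: "\<not> (m = CHAR('k) \<and> 2 < m)"
  shows "\<not> lsemisimple (HH1 m :: ('k::field, _) lie_alg)"
proof -
  interpret vf_model m "HH1 m :: ('k, _) lie_alg" "\<lambda>h. {vf_der m h}"
    using assms by (intro vf_model_HH1) simp_all
  consider "m = 2" | "m \<noteq> CHAR('k)"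
    using not_witt assms(2) by linarith
  then show ?thesis
  proof cases
    case 2
    obtain t where t: "m = CHAR('k) * t"
      using assms(3) by blast
    with 2 assms(2) have "2 \<le> t"
      by (cases t) auto
    then have "2 * CHAR('k) \<le> m"
      using mult_le_mono2[of 2 t "CHAR('k)"] t by (simp add: mult.commute)
    then show ?thesis
      using not_lsemisimple_if_twice_char_le assms by simp
  qed (rule not_lsemisimple_if_two)
qed

lemma lie_isomorphic_HH1_Witt11:
  assumes "CHAR('k) = m" "1 < m"
  shows "lie_isomorphic (HH1 m :: ('k::field, _) lie_alg) (Witt11 :: ('k, _) lie_alg)"
proof -
  interpret H: vf_model m "HH1 m :: ('k, _) lie_alg" "\<lambda>h. {vf_der m h}"
    using assms by (intro vf_model_HH1) simp_all
  have "CHAR('k) dvd m"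
    using assms(1) by simp
  then have "lie_isomorphic (HH1 m :: ('k, _) lie_alg) (Der_lie m)"
    using H.lie_isomorphic vf_model_Der_lie assms(2) by blast
  then show ?thesis
    unfolding Witt11_def assms(1) .
qed

lemma lsimple_HH1_if_lie_isomorphic_Witt11:
  assumes "2 < CHAR('k)" "CHAR('k) dvd m" "1 < m"
    and "lie_isomorphic (HH1 m :: ('k::field, _) lie_alg) (Witt11 :: ('k, _) lie_alg)"
  shows "lsimple (HH1 m :: ('k, _) lie_alg)"
proof -
  interpret H: vf_model m "HH1 m :: ('k, _) lie_alg" "\<lambda>h. {vf_der m h}"
    using assms by (intro vf_model_HH1)
  interpret W: witt_model "CHAR('k)" "Witt11 :: ('k, _) lie_alg" "vf_der CHAR('k)"
    using assms(1) by (rule witt_model_Witt11)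
  obtain f where f: "lie_iso (HH1 m) (Witt11 :: ('k, _) lie_alg) f"
    using assms(4) unfolding lie_isomorphic_def by blast
  show ?thesis
    by (rule lsimple_if_lie_iso[OF f H.lie_iso_zero[OF W.vf_model_axioms f] H.zero_in_carrier W.lsimple])
qed

theorem proposition3p3:
  fixes m :: nat
  assumes "CHAR('k::alg_closed_field) > 0"
    and "m \<ge> 2"
    and "CHAR('k) dvd m"
  shows "(lsimple (HH1 m :: ('k, _) lie_alg) \<longleftrightarrow> lsemisimple (HH1 m :: ('k, _) lie_alg))
       \<and> (lsemisimple (HH1 m :: ('k, _) lie_alg) \<longleftrightarrow> (m = CHAR('k) \<and> CHAR('k) > 2))
       \<and> ((m = CHAR('k) \<and> CHAR('k) > 2) \<longleftrightarrow>
            (lie_isomorphic (HH1 m :: ('k, _) lie_alg) (Witt11 :: ('k, _) lie_alg) \<and> CHAR('k) > 2))"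
proof -
  let ?H = "HH1 m :: ('k, _) lie_alg"
  interpret H: vf_model m ?H "\<lambda>h. {vf_der m h}"
    using assms by (intro vf_model_HH1) simp_all
  have "lsimple ?H" if "m = CHAR('k)" "2 < CHAR('k)"
    using that by (intro lsimple_HH1) simp_all
  moreover have "\<not> lsemisimple ?H" if "\<not> (m = CHAR('k) \<and> 2 < CHAR('k))"
    using that assms by (intro not_lsemisimple_HH1) auto
  moreover have "lie_isomorphic ?H Witt11" if "m = CHAR('k)"
    using that assms by (intro lie_isomorphic_HH1_Witt11) simp_all
  moreover have "lsimple ?H" if "lie_isomorphic ?H Witt11" "2 < CHAR('k)"
    using that assms by (intro lsimple_HH1_if_lie_isomorphic_Witt11) simp_all
  ultimately show ?thesis
    using H.lsemisimple_if_lsimple by blast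
qed

end
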